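(* Let $\mathbb K\in\{\mathbb R,\mathbb C\}$ and let $T$ be a norm one symmetric bilinear form on the Hilbert space $\mathbb K^2$ (with its standard inner product) that attains its norm at $(\mathbf{x},\mathbf{y})$, where $\mathbf{x},\mathbf{y}$ are norm one vectors with $\mathbf{x}\nparallel\mathbf{y}$. Then there is an orthonormal basis $F=\{\mathbf{f}_1,\mathbf{f}_2\}$ of $\mathbb K^2$ such that $$[T]_F=\begin{pmatrix}1&0\\0&-1\end{pmatrix}.$$ Consequently, the matrix $[T]_G$ is unitary for every orthonormal basis $G$ of $\mathbb K^2$. Moreover, in the real case the basis $\{\mathbf{f}_1,\mathbf{f}_2\}$ is unique up to signs.
   Context: $\mathbf{x}\parallel\mathbf{y}$ means $\mathbf{x}=\lambda\mathbf{y}$ for some $\lambda\in\mathbb K$, and $\mathbf{x}\nparallel\mathbf{y}$ means this fails. A bilinear form is $\mathbb K$-bilinear (not sesquilinear); its norm is $\|T\|=\sup\{|T(\mathbf{w}_1,\mathbf{w}_2)|:\|\mathbf{w}_1\|,\|\mathbf{w}_2\|\le1\}$, and $T$ attains its norm at $(\mathbf{x},\mathbf{y})$ if $|T(\mathbf{x},\mathbf{y})|=\|T\|$. For a basis $F=\{\mathbf{f}_1,\mathbf{f}_2\}$, $[T]_F$ is the matrix $(T(\mathbf{f}_i,\mathbf{f}_j))_{i,j}$, so $T(\mathbf{w}_1,\mathbf{w}_2)=[\mathbf{w}_1]_F[T]_F[\mathbf{w}_2]_F^t$ with $[\mathbf{w}]_F$ the row coordinate vector of $\mathbf{w}$ in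 $F$. *)

theory Defs
  imports "HOL-Analysis.Analysis"
begin

text \<open>Vectors of K^2 are elements of type K^2 (K = real or complex); the norm on
K^2 is the library's Euclidean (L2) norm, which is the norm of the standard inner product.\<close>

text \<open>K-bilinear (not sesquilinear) forms.\<close>
definition bilin :: "('a::comm_ring_1^'n \<Rightarrow> 'a^'n \<Rightarrow> 'a) \<Rightarrow> bool" where
  "bilin T \<longleftrightarrow>
     (\<forall>x y z. T (x + y) z = T x z + T y z) \<and>
     (\<forall>x y z. T x (y + z) = T x y + T x z) \<and>
     (\<forall>(c::'a) x y. T (c *s x) y = c * T x y) \<and>
     (\<forall>(c::'a) x y. T x (c *s y) = c * T x y)"

definition symmetric_form :: "('a^'n \<Rightarrow> 'a^'n \<Rightarrow> 'a) \<Rightarrow> bool" where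
  "symmetric_form T \<longleftrightarrow> (\<forall>x y. T x y = T y x)"

definition bform_norm :: "('a::real_normed_field^'n \<Rightarrow> 'a^'n \<Rightarrow> 'a) \<Rightarrow> real" where
  "bform_norm T = Sup {norm (T w1 w2) | w1 w2. norm w1 \<le> 1 \<and> norm w2 \<le> 1}"

definition attains_norm_at :: "('a::real_normed_field^'n \<Rightarrow> 'a^'n \<Rightarrow> 'a) \<Rightarrow> 'a^'n \<Rightarrow> 'a^'n \<Rightarrow> bool" where
  "attains_norm_at T x y \<longleftrightarrow> norm (T x y) = bform_norm T"

definition parallel :: "'a::comm_ring_1^'n \<Rightarrow> 'a^'n \<Rightarrow> bool" where
  "parallel x y \<longleftrightarrow> (\<exists>l::'a. x = l *s y)"

text \<open>Standard inner product on K^n; cj is the conjugation of K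
  (identity for K = real, cnj for K = complex).\<close>
definition std_inner :: "('a \<Rightarrow> 'a) \<Rightarrow> 'a::comm_ring_1^'n \<Rightarrow> 'a^'n \<Rightarrow> 'a" where
  "std_inner cj x y = (\<Sum>i\<in>UNIV. x $ i * cj (y $ i))"

definition is_onb :: "('a \<Rightarrow> 'a) \<Rightarrow> ('n \<Rightarrow> 'a::comm_ring_1^'n) \<Rightarrow> bool" where
  "is_onb cj F \<longleftrightarrow>
     (\<forall>i j. std_inner cj (F i) (F j) = (if i = j then 1 else 0)) \<and>
     (\<forall>v. \<exists>c. v = (\<Sum>i\<in>UNIV. c i *s F i))"

definition bmat :: "('a^'n \<Rightarrow> 'a^'n \<Rightarrow> 'a) \<Rightarrow> ('n \<Rightarrow> 'a^'n) \<Rightarrow> 'a^'n^'n" where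
  "bmat T F = (\<chi> i j. T (F i) (F j))"

definition diag_1_m1 :: "'a::comm_ring_1^2^2" where
  "diag_1_m1 = (\<chi> i j. if i = j then (if i = 1 then 1 else -1) else 0)"

definition unitary_mat :: "('a \<Rightarrow> 'a) \<Rightarrow> 'a::comm_ring_1^'n^'n \<Rightarrow> bool" where
  "unitary_mat cj M \<longleftrightarrow> M ** (\<chi> i j. cj (M $ j $ i)) = mat 1"

end

theory Submission
  imports Defs
begin

text \<open>
  Write T(u, v) = <u, B v> for the Hermitian product <u, v> = sum u_i conj(v_i), with B = form_op T
  conjugate-linear. Since the norm of T is 1, |B v| <= |v|, so |<x, B y>| = 1 is the equality case of
  Cauchy-Schwarz: B y = conj(l) x and, by symmetry, B x = conj(l) y, where l = T(x, y) is unimodular.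
  For every a /= 0 the vectors a x + conj(a l) y and a x - conj(a l) y are then fixed resp. negated by
  B; they are nonzero because x and y are not parallel, and orthogonal as soon as a^2 l <x, y> is
  real (take a = 1 over the reals and a = sqrt(conj(l <x, y>)) over the complex numbers).
  Normalised, they form the basis F. For symmetric T the (i, k) entry of [T]_G [T]_G^* is
  <B g_k, B g_i>, and in the basis F the map B is (p, q) |-> (conj p, - conj q), so that
  <B u, B v> = <v, u>; hence every [T]_G is unitary. Over the reals a unit vector u
  with T(u, u) = 1 (resp. -1) has F-coordinates with p^2 + q^2 = 1 and p^2 - q^2 = 1 (resp. -1),
  which forces u = +-f_1 (resp. u = +-f_2).
\<close>

lemma norm_of_real_scale:
  fixes x :: "'a::real_normed_algebra_1^'n"
  shows "norm (of_real r *s x) = \<bar>r\<bar> * norm x"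
proof -
  have "of_real r *s x = r *\<^sub>R x"
    by (simp add: vec_eq_iff) (simp add: scaleR_conv_of_real)
  then show ?thesis
    by simp
qed

lemma norm_normalize:
  fixes x :: "'a::real_normed_algebra_1^'n"
  assumes "x \<noteq> 0"
  shows "norm (of_real (1 / norm x) *s x) = 1"
  using assms by (simp add: norm_of_real_scale)

locale conjugation =
  fixes cj :: "'a::real_normed_field \<Rightarrow> 'a"
  assumes cj_add: "cj (a + b) = cj a + cj b"
    and cj_mult: "cj (a * b) = cj a * cj b"
    and cj_cj [simp]: "cj (cj a) = a"
    and cj_of_real [simp]: "cj (of_real r) = of_real r"
    and mult_cj_self: "a * cj a = of_real ((norm a)\<^sup>2)"
begin

lemma cj_0 [simp]: "cj 0 = 0"
  using cj_of_real[of 0] by simp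

lemma cj_1 [simp]: "cj 1 = 1"
  using cj_of_real[of 1] by simp

lemma cj_minus [simp]: "cj (- a) = - cj a"
  using cj_add[of a "- a"] by (simp add: add_eq_0_iff)

lemma cj_diff: "cj (a - b) = cj a - cj b"
  using cj_add[of a "- b"] by simp

lemma cj_sum: "cj (sum f A) = (\<Sum>i\<in>A. cj (f i))"
  by (induction A rule: infinite_finite_induct) (auto simp: cj_add)

abbreviation hp :: "'a^'n \<Rightarrow> 'a^'n \<Rightarrow> 'a" where
  "hp \<equiv> std_inner cj"

lemma hp_add_left: "hp (u + v) w = hp u w + hp v w"
  by (simp add: std_inner_def distrib_right sum.distrib)

lemma hp_add_right: "hp w (u + v) = hp w u + hp w v"
  by (simp add: std_inner_def cj_add distrib_left sum.distrib)

lemma hp_diff_left: "hp (u - v) w = hp u w - hp v w"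
  by (simp add: std_inner_def left_diff_distrib sum_subtractf)

lemma hp_diff_right: "hp w (u - v) = hp w u - hp w v"
  by (simp add: std_inner_def cj_diff right_diff_distrib sum_subtractf)

lemma hp_scale_left: "hp (c *s u) w = c * hp u w"
  by (simp add: std_inner_def sum_distrib_left mult.assoc)

lemma hp_scale_right: "hp w (c *s u) = cj c * hp w u"
  by (simp add: std_inner_def sum_distrib_left cj_mult mult_ac)

lemma hp_minus_left: "hp (- u) w = - hp u w"
  by (simp add: std_inner_def sum_negf)

lemma hp_minus_right: "hp w (- u) = - hp w u"
  by (simp add: std_inner_def sum_negf)

lemma hp_zero_right [simp]: "hp w 0 = 0"
  by (simp add: std_inner_def)

lemma hp_sum_right: "hp w (sum f A) = (\<Sum>j\<in>A. hp w (f j))"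
  by (induction A rule: infinite_finite_induct) (auto simp: hp_add_right)

lemmas hp_simps = hp_add_left hp_add_right hp_diff_left hp_diff_right
  hp_scale_left hp_scale_right hp_minus_left hp_minus_right

lemma hp_commute: "hp v u = cj (hp u v)"
  by (simp add: std_inner_def cj_sum cj_mult mult.commute)

lemma hp_eq_0_commute: "hp v u = 0 \<longleftrightarrow> hp u v = 0"
  by (metis cj_0 cj_cj hp_commute)

lemma hp_self: "hp u u = of_real ((norm u)\<^sup>2)"
proof -
  have "(norm u)\<^sup>2 = (\<Sum>i\<in>UNIV. (norm (u $ i))\<^sup>2)"
    unfolding norm_vec_def L2_set_def by (simp add: sum_nonneg)
  then show ?thesis
    by (simp add: std_inner_def mult_cj_self)
qed

lemma orthonormal_expansion:
  fixes F :: "'n::finite \<Rightarrow> 'a^'n"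
  assumes on: "\<And>i j. hp (F i) (F j) = (if i = j then 1 else 0)"
  shows "v = (\<Sum>i\<in>UNIV. hp v (F i) *s F i)"
proof -
  define U :: "'a^'n^'n" where "U = (\<chi> i k. F i $ k)"
  define U' :: "'a^'n^'n" where "U' = (\<chi> k i. cj (F i $ k))"
  have "U ** U' = mat 1"
    using on by (simp add: U_def U'_def matrix_matrix_mult_def mat_def vec_eq_iff std_inner_def)
  then have "U' ** U = mat 1"
    using matrix_left_right_inverse by blast
  then have dual: "(\<Sum>i\<in>UNIV. cj (F i $ k) * F i $ l) = (if k = l then 1 else 0)" for k l
    by (simp add: U_def U'_def matrix_matrix_mult_def mat_def vec_eq_iff)
  have "(\<Sum>i\<in>UNIV. hp v (F i) *s F i) $ l = (\<Sum>k\<in>UNIV. v $ k * (\<Sum>i\<in>UNIV. cj (F i $ k) * F i $ l))"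
    for l
    by (simp add: std_inner_def sum_distrib_left sum_distrib_right mult.assoc)
      (rule sum.swap)
  also have "\<dots> l = v $ l" for l
    by (simp add: dual if_distrib cong: if_cong)
  finally show ?thesis
    by (simp add: vec_eq_iff)
qed

lemma parseval:
  fixes G :: "'n::finite \<Rightarrow> 'a^'n"
  assumes "\<And>i j. hp (G i) (G j) = (if i = j then 1 else 0)"
  shows "hp u v = (\<Sum>j\<in>UNIV. hp u (G j) * cj (hp v (G j)))"
  by (subst orthonormal_expansion[OF assms, of v])
    (simp add: hp_sum_right hp_scale_right mult.commute)

lemma is_onb_iff_orthonormal:
  fixes F :: "'n::finite \<Rightarrow> 'a^'n"
  shows "is_onb cj F \<longleftrightarrow> (\<forall>i j. hp (F i) (F j) = (if i = j then 1 else 0))"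
  unfolding is_onb_def using orthonormal_expansion by (metis (no_types))

lemma bilin_simps:
  assumes "bilin T"
  shows "T (u + v) w = T u w + T v w" "T w (u + v) = T w u + T w v"
    "T (c *s u) w = c * T u w" "T w (c *s u) = c * T w u"
  using assms unfolding bilin_def by blast+

lemma bilin_zero:
  assumes "bilin T"
  shows "T 0 w = 0" "T w 0 = 0"
  using bilin_simps(3)[OF assms, where c = 0 and u = 0 and w = w]
    bilin_simps(4)[OF assms, where c = 0 and u = 0 and w = w]
  by simp_all

lemma bilin_sum_left:
  assumes "bilin T"
  shows "T (sum f A) w = (\<Sum>i\<in>A. T (f i) w)"
  by (induction A rule: infinite_finite_induct) (simp_all add: bilin_zero[OF assms] bilin_simps[OF assms])

lemma bilin_sum_right:
  assumes "bilin T"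
  shows "T w (sum f A) = (\<Sum>i\<in>A. T w (f i))"
  by (induction A rule: infinite_finite_induct) (simp_all add: bilin_zero[OF assms] bilin_simps[OF assms])

definition form_op :: "('a^'n \<Rightarrow> 'a^'n \<Rightarrow> 'a) \<Rightarrow> 'a^'n \<Rightarrow> 'a^'n" where
  "form_op T v = (\<chi> i. cj (T (axis i 1) v))"

lemma form_eq_hp_form_op:
  fixes T :: "'a^'n::finite \<Rightarrow> 'a^'n \<Rightarrow> 'a"
  assumes "bilin T"
  shows "T u v = hp u (form_op T v)"
proof -
  have "T u v = T (\<Sum>i\<in>UNIV. u $ i *s axis i 1) v"
    by (simp only: basis_expansion)
  then show ?thesis
    by (simp add: bilin_sum_left[OF assms] bilin_simps[OF assms] form_op_def std_inner_def)
qed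

lemma form_op_add:
  assumes "bilin T"
  shows "form_op T (u + v) = form_op T u + form_op T v"
  by (simp add: form_op_def vec_eq_iff bilin_simps[OF assms] cj_add)

lemma form_op_scale:
  assumes "bilin T"
  shows "form_op T (c *s u) = cj c *s form_op T u"
  by (simp add: form_op_def vec_eq_iff bilin_simps[OF assms] cj_mult)

lemma form_op_diff:
  assumes "bilin T"
  shows "form_op T (u - v) = form_op T u - form_op T v"
  using form_op_add[OF assms, of u "(-1) *s v"] form_op_scale[OF assms, of "-1" v] by simp

lemma form_norm_bound:
  fixes T :: "'a^'n::finite \<Rightarrow> 'a^'n \<Rightarrow> 'a"
  assumes T: "bilin T" and "norm u \<le> 1" "norm v \<le> 1"
  shows "norm (T u v) \<le> bform_norm T"
proof -
  define K where "K = (\<Sum>j\<in>UNIV. \<Sum>i\<in>UNIV. norm (T (axis i 1) (axis j 1)))"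
  have "norm (T w1 w2) \<le> K" if "norm w1 \<le> 1" "norm w2 \<le> 1" for w1 w2
  proof -
    have coord: "norm (w $ i) \<le> 1" if "norm w \<le> 1" for w :: "'a^'n" and i
      using Finite_Cartesian_Product.norm_nth_le[of w i] that by linarith
    have "T w1 w2 = (\<Sum>j\<in>UNIV. \<Sum>i\<in>UNIV. w2 $ j * (w1 $ i * T (axis i 1) (axis j 1)))"
      by (subst (1 2) basis_expansion[symmetric])
        (simp add: bilin_sum_left[OF T] bilin_sum_right[OF T] bilin_simps[OF T] sum_distrib_left)
    also have "norm \<dots> \<le> K"
      unfolding K_def using coord[OF that(1)] coord[OF that(2)]
      by (intro sum_norm_le) (auto simp: norm_mult mult_left_le_one_le mult_le_one mult.assoc[symmetric])
    finally show ?thesis .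
  qed
  then have "bdd_above {norm (T w1 w2) | w1 w2. norm w1 \<le> 1 \<and> norm w2 \<le> 1}"
    by (intro bdd_aboveI[of _ K]) auto
  then show ?thesis
    unfolding bform_norm_def using assms(2,3) by (intro cSup_upper) auto
qed

lemma bform_norm_nonneg:
  fixes T :: "'a^'n::finite \<Rightarrow> 'a^'n \<Rightarrow> 'a"
  assumes "bilin T"
  shows "0 \<le> bform_norm T"
  using form_norm_bound[OF assms, of 0 0] bilin_zero[OF assms] by simp

lemma hp_normalize_self:
  assumes "f \<noteq> 0"
  shows "hp (of_real (1 / norm f) *s f) (of_real (1 / norm f) *s f) = 1"
  using norm_normalize[OF assms] by (simp only: hp_self) simp

lemma norm_form_op_le:
  fixes T :: "'a^'n::finite \<Rightarrow> 'a^'n \<Rightarrow> 'a"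
  assumes T: "bilin T" and v: "norm v \<le> 1"
  shows "norm (form_op T v) \<le> bform_norm T"
proof (cases "form_op T v = 0")
  case False
  define w where "w = form_op T v"
  define u where "u = of_real (1 / norm w) *s w"
  have "norm u = 1"
    unfolding u_def w_def using False by (rule norm_normalize)
  have "T u v = of_real (norm w)"
    using False by (simp add: form_eq_hp_form_op[OF T] u_def w_def[symmetric] hp_scale_left hp_self
        power2_eq_square)
  then show ?thesis
    using form_norm_bound[OF T _ v, of u] \<open>norm u = 1\<close> by (simp add: w_def)
qed (simp add: bform_norm_nonneg[OF T])

lemma cauchy_schwarz_equality:
  assumes u: "norm u = 1" and w: "norm w \<le> 1" and uw: "norm (hp u w) = 1"
  shows "w = cj (hp u w) *s u"
proof -
  define l where "l = hp u w"
  define d where "d = w - cj l *s u"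
  have "l * cj l = 1" "cj l * l = 1"
    using mult_cj_self[of l] uw by (simp_all add: l_def mult.commute)
  have "hp d d = hp w w - l * hp w u - cj l * hp u w + cj l * l * hp u u"
    by (simp add: d_def hp_simps algebra_simps)
  also have "\<dots> = hp w w - 1"
    using \<open>l * cj l = 1\<close> \<open>cj l * l = 1\<close> u by (simp add: hp_commute[of w u] hp_self flip: l_def)
  finally have "(of_real ((norm d)\<^sup>2) :: 'a) = of_real ((norm w)\<^sup>2 - 1)"
    by (simp only: hp_self of_real_diff of_real_1)
  then have "(norm d)\<^sup>2 = (norm w)\<^sup>2 - 1"
    by (simp only: of_real_eq_iff)
  moreover have "(norm w)\<^sup>2 \<le> 1"
    using w by (simp add: power_le_one)
  ultimately have "(norm d)\<^sup>2 \<le> 0"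
    by linarith
  then show ?thesis
    by (simp add: d_def l_def)
qed

lemma form_op_at_norming_pair:
  fixes T :: "'a^'n::finite \<Rightarrow> 'a^'n \<Rightarrow> 'a"
  assumes T: "bilin T" "symmetric_form T" "bform_norm T = 1"
    and x: "norm x = 1" and y: "norm y = 1" and "attains_norm_at T x y"
  shows "norm (T x y) = 1" "form_op T y = cj (T x y) *s x" "form_op T x = cj (T x y) *s y"
proof -
  show norm_Txy: "norm (T x y) = 1"
    using assms by (simp add: attains_norm_at_def)
  have Tyx: "T y x = T x y"
    using T(2) by (simp add: symmetric_form_def)
  have "norm (form_op T v) \<le> 1" if "norm v = 1" for v
    using norm_form_op_le[OF T(1)] T(3) that by simp
  then show "form_op T y = cj (T x y) *s x" "form_op T x = cj (T x y) *s y"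
    using cauchy_schwarz_equality[OF x, of "form_op T y"] cauchy_schwarz_equality[OF y, of "form_op T x"]
      x y norm_Txy Tyx by (simp_all add: form_eq_hp_form_op[OF T(1)])
qed

lemma orthonormal_eigenpair_of_norming_pair:
  fixes T :: "'a^'n::finite \<Rightarrow> 'a^'n \<Rightarrow> 'a"
  assumes T: "bilin T" "symmetric_form T" "bform_norm T = 1"
    and x: "norm x = 1" and y: "norm y = 1" and "\<not> parallel x y" and "attains_norm_at T x y"
    and "a \<noteq> 0" and phase: "cj (a * a * (T x y * hp x y)) = a * a * (T x y * hp x y)"
  obtains e1 e2 where "hp e1 e1 = 1" "hp e2 e2 = 1" "hp e1 e2 = 0"
    "form_op T e1 = e1" "form_op T e2 = - e2"
proof -
  define l where "l = T x y"
  define b where "b = cj (a * l)"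
  define f1 where "f1 = a *s x + b *s y"
  define f2 where "f2 = a *s x - b *s y"
  note norming = form_op_at_norming_pair[OF T x y \<open>attains_norm_at T x y\<close>, folded l_def]
  have "l * cj l = 1"
    using mult_cj_self[of l] norming(1) by simp
  then have cj_b: "cj b * cj l = a" and cj_a: "cj a * cj l = b"
    by (simp_all add: b_def cj_mult mult.assoc)
  have eigen1: "form_op T f1 = f1"
    using norming(2,3) cj_a cj_b
    by (simp add: f1_def form_op_add[OF T(1)] form_op_scale[OF T(1)] add.commute)
  have eigen2: "form_op T f2 = - f2"
    using norming(2,3) cj_a cj_b
    by (simp add: f2_def form_op_diff[OF T(1)] form_op_scale[OF T(1)])
  have "f1 \<noteq> 0" "f2 \<noteq> 0"
  proof -
    have "x \<noteq> c *s y" for c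
      using \<open>\<not> parallel x y\<close> by (auto simp: parallel_def)
    from this[of "- b / a"] this[of "b / a"] show "f1 \<noteq> 0" "f2 \<noteq> 0"
      using \<open>a \<noteq> 0\<close> by (auto simp: f1_def f2_def vec_eq_iff field_simps add_eq_0_iff2)
  qed
  have "hp f1 f2 = a * cj a * hp x x - a * cj b * hp x y + b * cj a * hp y x - b * cj b * hp y y"
    by (simp add: f1_def f2_def hp_simps algebra_simps)
  also have "\<dots> = cj (a * a * (l * hp x y)) - a * a * (l * hp x y)"
    using x y \<open>l * cj l = 1\<close>
    by (simp add: hp_self b_def hp_commute[of y x] cj_mult algebra_simps)
  finally have "hp f1 f2 = 0"
    using phase by (simp add: l_def)
  define e1 where "e1 = of_real (1 / norm f1) *s f1"
  define e2 where "e2 = of_real (1 / norm f2) *s f2"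
  show thesis
  proof
    show "hp e1 e1 = 1"
      unfolding e1_def using \<open>f1 \<noteq> 0\<close> by (rule hp_normalize_self)
    show "hp e2 e2 = 1"
      unfolding e2_def using \<open>f2 \<noteq> 0\<close> by (rule hp_normalize_self)
    show "hp e1 e2 = 0"
      using \<open>hp f1 f2 = 0\<close> by (simp add: e1_def e2_def hp_scale_left hp_scale_right)
    show "form_op T e1 = e1" "form_op T e2 = - e2"
      using eigen1 eigen2 by (simp_all add: e1_def e2_def form_op_scale[OF T(1)] del: of_real_divide)
  qed
qed

lemma unitary_bmat_if_antiunitary:
  fixes T :: "'a^'n::finite \<Rightarrow> 'a^'n \<Rightarrow> 'a"
  assumes T: "bilin T" "symmetric_form T"
    and antiunitary: "\<And>u v. hp (form_op T u) (form_op T v) = hp v u"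
    and G: "is_onb cj G"
  shows "unitary_mat cj (bmat T G)"
proof -
  have onG: "\<And>i j. hp (G i) (G j) = (if i = j then 1 else 0)"
    using G by (simp add: is_onb_iff_orthonormal)
  have entry: "T (G i) (G j) = cj (hp (form_op T (G i)) (G j))" for i j
  proof -
    have "T (G i) (G j) = T (G j) (G i)"
      using T(2) by (simp add: symmetric_form_def)
    also have "\<dots> = cj (hp (form_op T (G i)) (G j))"
      by (simp add: form_eq_hp_form_op[OF T(1)] hp_commute[of "G j"])
    finally show ?thesis .
  qed
  have "(bmat T G ** (\<chi> i j. cj (bmat T G $ j $ i))) $ i $ k
      = (\<Sum>j\<in>UNIV. hp (form_op T (G k)) (G j) * cj (hp (form_op T (G i)) (G j)))" for i k
    by (simp add: bmat_def matrix_matrix_mult_def entry mult.commute)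
  also have "\<dots> i k = hp (G i) (G k)" for i k
    by (simp add: parseval[OF onG, symmetric] antiunitary)
  finally show ?thesis
    by (simp add: unitary_mat_def vec_eq_iff onG mat_def)
qed

lemma is_onb_pair:
  fixes e1 e2 :: "'a^2"
  assumes "hp e1 e1 = 1" "hp e2 e2 = 1" "hp e1 e2 = 0"
  shows "is_onb cj (\<lambda>i::2. if i = 1 then e1 else e2)"
  using assms exhaust_2 by (auto simp: is_onb_iff_orthonormal hp_eq_0_commute)

lemma orthonormal_pair_expansion:
  fixes e1 e2 :: "'a^2"
  assumes "hp e1 e1 = 1" "hp e2 e2 = 1" "hp e1 e2 = 0"
  shows "w = hp w e1 *s e1 + hp w e2 *s e2"
  using orthonormal_expansion[of "\<lambda>i::2. if i = 1 then e1 else e2" w] is_onb_pair[OF assms]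
  by (simp add: is_onb_iff_orthonormal sum_2)

lemma orthonormal_pair_parseval:
  fixes e1 e2 :: "'a^2"
  assumes "hp e1 e1 = 1" "hp e2 e2 = 1" "hp e1 e2 = 0"
  shows "hp v u = hp v e1 * cj (hp u e1) + hp v e2 * cj (hp u e2)"
  by (subst orthonormal_pair_expansion[OF assms, of u]) (simp add: hp_simps mult.commute)

lemma form_op_eigenbasis_expansion:
  fixes T :: "'a^2 \<Rightarrow> 'a^2 \<Rightarrow> 'a"
  assumes T: "bilin T"
    and e: "hp e1 e1 = 1" "hp e2 e2 = 1" "hp e1 e2 = 0"
    and eigen: "form_op T e1 = e1" "form_op T e2 = - e2"
  shows "form_op T w = cj (hp w e1) *s e1 - cj (hp w e2) *s e2"
  by (subst orthonormal_pair_expansion[OF e, of w])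
    (simp add: form_op_add[OF T] form_op_scale[OF T] eigen vector_smult_lneg)

lemma form_op_antiunitary_if_eigenbasis:
  fixes T :: "'a^2 \<Rightarrow> 'a^2 \<Rightarrow> 'a"
  assumes T: "bilin T"
    and e: "hp e1 e1 = 1" "hp e2 e2 = 1" "hp e1 e2 = 0"
    and eigen: "form_op T e1 = e1" "form_op T e2 = - e2"
  shows "hp (form_op T u) (form_op T v) = hp v u"
  using e by (simp add: form_op_eigenbasis_expansion[OF T e eigen] orthonormal_pair_parseval[OF e, of v u]
      hp_simps hp_eq_0_commute mult.commute)

lemma eigenbasis_diagonalizes:
  fixes T :: "'a^2 \<Rightarrow> 'a^2 \<Rightarrow> 'a"
  assumes T: "bilin T" "symmetric_form T"
    and e: "hp e1 e1 = 1" "hp e2 e2 = 1" "hp e1 e2 = 0"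
    and eigen: "form_op T e1 = e1" "form_op T e2 = - e2"
  defines "F \<equiv> \<lambda>i::2. if i = 1 then e1 else e2"
  shows "is_onb cj F \<and> bmat T F = diag_1_m1 \<and> (\<forall>G. is_onb cj G \<longrightarrow> unitary_mat cj (bmat T G))"
proof (intro conjI allI impI)
  show "is_onb cj F"
    unfolding F_def using e by (rule is_onb_pair)
  show "bmat T F = diag_1_m1"
    using e exhaust_2
    by (auto simp: vec_eq_iff bmat_def diag_1_m1_def F_def form_eq_hp_form_op[OF T(1)] eigen hp_simps
        hp_eq_0_commute)
  show "unitary_mat cj (bmat T G)" if "is_onb cj G" for G
    using unitary_bmat_if_antiunitary[OF T form_op_antiunitary_if_eigenbasis[OF T(1) e eigen] that] .
qed

end

interpretation R: conjugation "id :: real \<Rightarrow> real"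
  by unfold_locales (simp_all add: power2_eq_square)

interpretation C: conjugation cnj
proof
  show "a * cnj a = of_real ((norm a)\<^sup>2)" for a
    by (simp only: complex_norm_square)
qed simp_all

lemma complex_phase_exists: "\<exists>a::complex. a \<noteq> 0 \<and> cnj (a * a * z) = a * a * z"
proof (cases "z = 0")
  case False
  define a where "a = csqrt (cnj z)"
  have "a * a * z = z * cnj z"
    using power2_csqrt[of "cnj z"] by (simp add: a_def power2_eq_square mult.commute)
  also have "\<dots> = of_real ((norm z)\<^sup>2)"
    by (simp only: complex_norm_square)
  finally have "cnj (a * a * z) = a * a * z"
    by (simp only: complex_cnj_complex_of_real)
  moreover have "a \<noteq> 0"
    using False by (simp add: a_def)
  ultimately show ?thesis
    by blast
qed auto

lemma real_eigenbasis_unique_up_to_sign: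
  fixes T :: "real^2 \<Rightarrow> real^2 \<Rightarrow> real"
  assumes T: "bilin T"
    and e: "R.hp e1 e1 = 1" "R.hp e2 e2 = 1" "R.hp e1 e2 = 0"
    and eigen: "R.form_op T e1 = e1" "R.form_op T e2 = - e2"
    and F: "is_onb id F" "bmat T F = diag_1_m1"
  shows "(F 1 = e1 \<or> F 1 = - e1) \<and> (F 2 = e2 \<or> F 2 = - e2)"
proof -
  have coords: "R.hp u u = (R.hp u e1)\<^sup>2 + (R.hp u e2)\<^sup>2" "T u u = (R.hp u e1)\<^sup>2 - (R.hp u e2)\<^sup>2" for u
    using e
    by (simp_all add: R.hp_eq_0_commute R.orthonormal_pair_parseval[OF e, of u u] R.form_eq_hp_form_op[OF T]
        R.form_op_eigenbasis_expansion[OF T e eigen] R.hp_simps power2_eq_square)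
  have "R.hp (F k) (F k) = 1" for k
    using F(1) by (simp add: R.is_onb_iff_orthonormal)
  then have norm1: "(R.hp (F k) e1)\<^sup>2 + (R.hp (F k) e2)\<^sup>2 = 1" for k
    by (simp add: coords(1))
  have "T (F 1) (F 1) = 1" "T (F 2) (F 2) = -1"
    using F(2) by (simp_all add: vec_eq_iff bmat_def diag_1_m1_def)
  then have "(R.hp (F 1) e1)\<^sup>2 - (R.hp (F 1) e2)\<^sup>2 = 1" "(R.hp (F 2) e1)\<^sup>2 - (R.hp (F 2) e2)\<^sup>2 = -1"
    by (simp_all add: coords(2))
  then have "(R.hp (F 1) e2)\<^sup>2 = 0" "(R.hp (F 1) e1)\<^sup>2 = 1"
      "(R.hp (F 2) e1)\<^sup>2 = 0" "(R.hp (F 2) e2)\<^sup>2 = 1"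
    using norm1[of 1] norm1[of 2] by linarith+
  then show ?thesis
    using R.orthonormal_pair_expansion[OF e, of "F 1"] R.orthonormal_pair_expansion[OF e, of "F 2"]
    by (auto simp: power2_eq_1_iff)
qed

theorem lemma2p1:
  shows
  "(\<forall>(T :: real^2 \<Rightarrow> real^2 \<Rightarrow> real) x y.
      bilin T \<and> symmetric_form T \<and> bform_norm T = 1 \<and>
      norm x = 1 \<and> norm y = 1 \<and> \<not> parallel x y \<and> attains_norm_at T x y \<longrightarrow>
      (\<exists>F. is_onb id F \<and> bmat T F = diag_1_m1 \<and>
         (\<forall>G. is_onb id G \<longrightarrow> unitary_mat id (bmat T G)) \<and>
         (\<forall>F'. is_onb id F' \<and> bmat T F' = diag_1_m1 \<longrightarrow>
             (F' 1 = F 1 \<or> F' 1 = - F 1) \<and> (F' 2 = F 2 \<or> F' 2 = - F 2))))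
   \<and>
   (\<forall>(T :: complex^2 \<Rightarrow> complex^2 \<Rightarrow> complex) x y.
      bilin T \<and> symmetric_form T \<and> bform_norm T = 1 \<and>
      norm x = 1 \<and> norm y = 1 \<and> \<not> parallel x y \<and> attains_norm_at T x y \<longrightarrow>
      (\<exists>F. is_onb cnj F \<and> bmat T F = diag_1_m1 \<and>
         (\<forall>G. is_onb cnj G \<longrightarrow> unitary_mat cnj (bmat T G))))"
proof (intro conjI allI impI, goal_cases real complex)
  case (real T x y)
  then have T: "bilin T" "symmetric_form T" "bform_norm T = 1"
    and xy: "norm x = 1" "norm y = 1" "\<not> parallel x y" "attains_norm_at T x y"
    by simp_all
  obtain e1 e2 where e: "R.hp e1 e1 = 1" "R.hp e2 e2 = 1" "R.hp e1 e2 = 0"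
    and eigen: "R.form_op T e1 = e1" "R.form_op T e2 = - e2"
    using R.orthonormal_eigenpair_of_norming_pair[OF T xy, of 1] by auto
  then show ?case
    using R.eigenbasis_diagonalizes[OF T(1,2) e eigen] real_eigenbasis_unique_up_to_sign[OF T(1) e eigen]
    by (intro exI[of _ "\<lambda>i::2. if i = 1 then e1 else e2"]) auto
next
  case (complex T x y)
  then have T: "bilin T" "symmetric_form T" "bform_norm T = 1"
    and xy: "norm x = 1" "norm y = 1" "\<not> parallel x y" "attains_norm_at T x y"
    by simp_all
  obtain a where "a \<noteq> 0" "cnj (a * a * (T x y * C.hp x y)) = a * a * (T x y * C.hp x y)"
    using complex_phase_exists by blast
  then obtain e1 e2 where "C.hp e1 e1 = 1" "C.hp e2 e2 = 1" "C.hp e1 e2 = 0"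
    "C.form_op T e1 = e1" "C.form_op T e2 = - e2"
    using C.orthonormal_eigenpair_of_norming_pair[OF T xy] by blast
  then show ?case
    using C.eigenbasis_diagonalizes[OF T(1,2)] by blast
qed

end
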